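(* Let $N\ge1$ be an integer and $f\in L^2(\pi)$. Then $\langle f,P_Nf\rangle_\pi\ge\langle f,P_{N+1}f\rangle_\pi$, and the inequality is strict if and only if $\|f-\mathbb{E}_\pi[f]\|_\pi>0$.
   Context: Let $\pi,q$ be probability densities with respect to a $\sigma$-finite measure $\mu$ on $(\mathbb{X},\mathcal{X})$ with $q>0$ wherever $\pi>0$; $\pi(dx)=\pi(x)\mu(dx)$, $q(dx)=q(x)\mu(dx)$, $\mathbb{S}=\{\pi>0\}$, $w=\pi/q$ on $\mathbb{S}$ and $0$ elsewhere. For integer $N\ge1$ and $z_1\in\mathbb{S}$, $P_N(z_1,A)=\int_{\mathbb{X}^{N-1}}\sum_{i=1}^N\frac{w(z_i)}{\sum_{j=1}^Nw(z_j)}\mathbf 1\{z_i\in A\}\prod_{n=2}^Nq(dz_n)$, $P_1(z,\cdot)=\delta_z$, $P_Nf(x)=\int f(y)P_N(x,dy)$; $\langle g,h\rangle_\pi=\int gh\,d\pi$, $\|g\|_\pi^2=\langle g,g\rangle_\pi$. *)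

theory Defs
  imports "HOL-Probability.Probability"
begin

definition mtm_w :: "('a \<Rightarrow> real) \<Rightarrow> ('a \<Rightarrow> real) \<Rightarrow> 'a \<Rightarrow> real" where
  "mtm_w p q x = (if p x > 0 then p x / q x else 0)"

definition mtm_op :: "'a measure \<Rightarrow> ('a \<Rightarrow> real) \<Rightarrow> ('a \<Rightarrow> real) \<Rightarrow> nat
    \<Rightarrow> ('a \<Rightarrow> real) \<Rightarrow> 'a \<Rightarrow> real" where
  "mtm_op M p q N f x =
     (\<integral>z. (let z' = z(1 := x) in
            (\<Sum>i\<in>{1..N}. mtm_w p q (z' i) / (\<Sum>j\<in>{1..N}. mtm_w p q (z' j)) * f (z' i)))
       \<partial>(\<Pi>\<^sub>M n\<in>{2..N}. density M (\<lambda>y. ennreal (q y))))"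

definition pi_inner :: "'a measure \<Rightarrow> ('a \<Rightarrow> real) \<Rightarrow> ('a \<Rightarrow> real) \<Rightarrow> ('a \<Rightarrow> real) \<Rightarrow> real" where
  "pi_inner M p g h = (\<integral>x. g x * h x \<partial>(density M (\<lambda>y. ennreal (p y))))"

definition pi_norm :: "'a measure \<Rightarrow> ('a \<Rightarrow> real) \<Rightarrow> ('a \<Rightarrow> real) \<Rightarrow> real" where
  "pi_norm M p g = sqrt (pi_inner M p g g)"

definition pi_expect :: "'a measure \<Rightarrow> ('a \<Rightarrow> real) \<Rightarrow> ('a \<Rightarrow> real) \<Rightarrow> real" where
  "pi_expect M p f = (\<integral>x. f x \<partial>(density M (\<lambda>y. ennreal (p y))))"

end

theory Submission
  imports Defs
begin

(* With z_1 = x and z_2, ..., z_N i.i.d. q, weighting by w = pi/q turns the outer integral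
   over pi into one over q, so <f, P_N f> = E[w(z_1) f(z_1) m] for z_1, ..., z_N i.i.d. q, where m
   is the w-weighted mean of f(z_1), ..., f(z_N). By exchangeability this is E[W m^2] / N with W
   the total weight. For N + 1 proposals the leave-one-out identity
     sum_k W_(-k) m_(-k)^2 - N W m^2 = sum_k W_(-k) (m_(-k) - m)^2
   and the fact that each leave-one-out family is again N i.i.d. proposals show that
   N (N + 1) (<f, P_N f> - <f, P_(N+1) f>) is the expectation of a sum of squares. It vanishes iff
   f is pi-a.e. constant: otherwise z_1 and z_2 fall with positive probability into
   {w > 0, f < E f} and {w > 0, f > E f}, where two weighted values differ. *)

section \<open>Weighted means and the leave-one-out identity\<close>

text \<open>For zero total weight the mean is \<open>0\<close>, matching the convention \<open>w\<^sub>i / 0 = 0\<close> in \<^const>\<open>mtm_op\<close>.\<close>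

definition weighted_mean :: "('i \<Rightarrow> real) \<Rightarrow> ('i \<Rightarrow> real) \<Rightarrow> 'i set \<Rightarrow> real" where
  "weighted_mean a x J = (\<Sum>i\<in>J. a i * x i) / (\<Sum>i\<in>J. a i)"

definition mass_mean_sq :: "('i \<Rightarrow> real) \<Rightarrow> ('i \<Rightarrow> real) \<Rightarrow> 'i set \<Rightarrow> real" where
  "mass_mean_sq a x J = (\<Sum>i\<in>J. a i) * (weighted_mean a x J)\<^sup>2"

lemma sum_mult_weighted_mean:
  assumes "finite J" and "\<And>i. i \<in> J \<Longrightarrow> 0 \<le> a i"
  shows "(\<Sum>i\<in>J. a i) * weighted_mean a x J = (\<Sum>i\<in>J. a i * x i)"
proof (cases "(\<Sum>i\<in>J. a i) = 0")
  case True
  then have "\<forall>i\<in>J. a i = 0" using sum_nonneg_eq_0_iff assms by blast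
  then show ?thesis by simp
qed (simp add: weighted_mean_def)

lemma mass_mean_sq_eq:
  assumes "finite J" and "\<And>i. i \<in> J \<Longrightarrow> 0 \<le> a i"
  shows "mass_mean_sq a x J = (\<Sum>i\<in>J. a i * x i) * weighted_mean a x J"
  unfolding mass_mean_sq_def power2_eq_square
  by (simp flip: sum_mult_weighted_mean[OF assms])

lemma mass_mean_sq_nonneg:
  "(\<And>i. i \<in> J \<Longrightarrow> 0 \<le> a i) \<Longrightarrow> 0 \<le> mass_mean_sq a x J"
  unfolding mass_mean_sq_def by (simp add: sum_nonneg)

lemma weighted_mean_reindex:
  assumes "bij_betw t A B"
  shows "weighted_mean (\<lambda>i. a (t i)) (\<lambda>i. x (t i)) A = weighted_mean a x B"
  unfolding weighted_mean_def
  using sum.reindex_bij_betw[OF assms, of a] sum.reindex_bij_betw[OF assms, of "\<lambda>i. a i * x i"]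
  by simp

lemma mass_mean_sq_reindex:
  assumes "bij_betw t A B"
  shows "mass_mean_sq (\<lambda>i. a (t i)) (\<lambda>i. x (t i)) A = mass_mean_sq a x B"
  unfolding mass_mean_sq_def weighted_mean_reindex[OF assms]
  using sum.reindex_bij_betw[OF assms, of a] by simp

lemma weighted_sum_sq_dev:
  fixes a x :: "'i \<Rightarrow> real"
  shows "(\<Sum>i\<in>J. a i * (x i - m)\<^sup>2)
     = (\<Sum>i\<in>J. a i * (x i)\<^sup>2) - 2 * m * (\<Sum>i\<in>J. a i * x i) + m\<^sup>2 * (\<Sum>i\<in>J. a i)"
proof -
  have "(\<Sum>i\<in>J. a i * (x i - m)\<^sup>2) = (\<Sum>i\<in>J. a i * (x i)\<^sup>2 - 2 * m * (a i * x i) + m\<^sup>2 * a i)"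
    by (intro sum.cong refl) (simp add: power2_diff algebra_simps)
  then show ?thesis
    by (simp add: sum.distrib sum_subtractf sum_distrib_left)
qed

lemma mass_mean_sq_le_sum_sq:
  assumes "finite J" and "\<And>i. i \<in> J \<Longrightarrow> 0 \<le> a i"
  shows "mass_mean_sq a x J \<le> (\<Sum>i\<in>J. a i * (x i)\<^sup>2)"
proof -
  let ?m = "weighted_mean a x J"
  have "0 \<le> (\<Sum>i\<in>J. a i * (x i - ?m)\<^sup>2)"
    using assms(2) by (intro sum_nonneg) auto
  also have "\<dots> = (\<Sum>i\<in>J. a i * (x i)\<^sup>2) - mass_mean_sq a x J"
    unfolding weighted_sum_sq_dev mass_mean_sq_def
    by (simp flip: sum_mult_weighted_mean[OF assms] add: power2_eq_square algebra_simps)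
  finally show ?thesis by simp
qed

lemma abs_term_mult_weighted_mean_le:
  assumes "finite J" and "\<And>i. i \<in> J \<Longrightarrow> 0 \<le> a i" and "k \<in> J"
  shows "\<bar>a k * x k * weighted_mean a x J\<bar> \<le> (\<Sum>i\<in>J. a i * (x i)\<^sup>2)"
proof -
  let ?m = "weighted_mean a x J" and ?D = "\<Sum>i\<in>J. a i * (x i)\<^sup>2"
  have ak: "0 \<le> a k" using assms by auto
  have "a k * ?m\<^sup>2 \<le> mass_mean_sq a x J"
    unfolding mass_mean_sq_def using assms
    by (intro mult_right_mono member_le_sum) auto
  also have "\<dots> \<le> ?D" by (rule mass_mean_sq_le_sum_sq[OF assms(1,2)])
  finally have mean_part: "a k * ?m\<^sup>2 \<le> ?D" .
  have term_part: "a k * (x k)\<^sup>2 \<le> ?D"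
    using assms by (intro member_le_sum) auto
  \<comment> \<open>AM-GM: \<open>2 |u v| \<le> u\<^sup>2 + v\<^sup>2\<close>, weighted by \<open>a k\<close>\<close>
  have "2 * \<bar>x k * ?m\<bar> \<le> (x k)\<^sup>2 + ?m\<^sup>2"
    using sum_squares_bound[of "\<bar>x k\<bar>" "\<bar>?m\<bar>"] by (simp add: abs_mult)
  from mult_left_mono[OF this ak] mean_part term_part
  show ?thesis by (simp add: abs_mult ak algebra_simps)
qed

lemma sum_leave_one_out:
  fixes g :: "'i \<Rightarrow> real"
  assumes "finite I"
  shows "(\<Sum>k\<in>I. \<Sum>i\<in>I - {k}. g i) = (real (card I) - 1) * (\<Sum>i\<in>I. g i)"
proof -
  have "(\<Sum>k\<in>I. \<Sum>i\<in>I - {k}. g i) = (\<Sum>k\<in>I. (\<Sum>i\<in>I. g i) - g k)"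
    using assms by (intro sum.cong refl) (simp add: sum_diff1)
  then show ?thesis by (simp add: sum_subtractf algebra_simps)
qed

definition leave_one_out_gap :: "('i \<Rightarrow> real) \<Rightarrow> ('i \<Rightarrow> real) \<Rightarrow> 'i set \<Rightarrow> real" where
  "leave_one_out_gap a x I =
     (\<Sum>k\<in>I. mass_mean_sq a x (I - {k})) - (real (card I) - 1) * mass_mean_sq a x I"

lemma leave_one_out_gap_eq_sum_sq:
  assumes fin: "finite I" and nonneg: "\<And>i. i \<in> I \<Longrightarrow> 0 \<le> a i"
  shows "leave_one_out_gap a x I
    = (\<Sum>k\<in>I. (\<Sum>i\<in>I - {k}. a i) * (weighted_mean a x (I - {k}) - weighted_mean a x I)\<^sup>2)"
proof -
  let ?W = "\<lambda>k. \<Sum>i\<in>I - {k}. a i" and ?m = "\<lambda>k. weighted_mean a x (I - {k})"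
  let ?n = "real (card I) - 1" and ?M = "weighted_mean a x I"
  have loo: "?W k * ?m k = (\<Sum>i\<in>I - {k}. a i * x i)" for k
    using fin nonneg by (intro sum_mult_weighted_mean) auto
  have whole: "(\<Sum>i\<in>I. a i) * ?M = (\<Sum>i\<in>I. a i * x i)"
    using fin nonneg by (rule sum_mult_weighted_mean)
  have "(\<Sum>k\<in>I. ?W k * (?m k - ?M)\<^sup>2)
      = (\<Sum>k\<in>I. ?W k * (?m k)\<^sup>2) - 2 * ?M * (\<Sum>k\<in>I. ?W k * ?m k) + ?M\<^sup>2 * (\<Sum>k\<in>I. ?W k)"
    by (rule weighted_sum_sq_dev)
  also have "\<dots> = (\<Sum>k\<in>I. mass_mean_sq a x (I - {k})) - ?n * ((\<Sum>i\<in>I. a i) * ?M\<^sup>2)"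
    unfolding loo sum_leave_one_out[OF fin] mass_mean_sq_def
    by (simp flip: whole add: power2_eq_square algebra_simps)
  finally show ?thesis
    unfolding leave_one_out_gap_def mass_mean_sq_def by simp
qed

lemma leave_one_out_gap_nonneg:
  "finite I \<Longrightarrow> (\<And>i. i \<in> I \<Longrightarrow> 0 \<le> a i) \<Longrightarrow> 0 \<le> leave_one_out_gap a x I"
  by (auto simp: leave_one_out_gap_eq_sum_sq intro!: sum_nonneg mult_nonneg_nonneg)

lemma weighted_mean_const:
  assumes "\<And>i. i \<in> J \<Longrightarrow> 0 < a i \<Longrightarrow> x i = c" and "\<And>i. i \<in> J \<Longrightarrow> 0 \<le> a i"
    and "(\<Sum>i\<in>J. a i) \<noteq> 0"
  shows "weighted_mean a x J = c"
proof -
  have "(\<Sum>i\<in>J. a i * x i) = (\<Sum>i\<in>J. a i * c)"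
    using assms(1,2) by (intro sum.cong refl) (metis order_le_less mult_zero_left)
  then show ?thesis using assms(3) by (simp add: weighted_mean_def flip: sum_distrib_right)
qed

lemma leave_one_out_gap_eq_0:
  assumes fin: "finite I" and nonneg: "\<And>i. i \<in> I \<Longrightarrow> 0 \<le> a i"
    and const: "\<And>i. i \<in> I \<Longrightarrow> 0 < a i \<Longrightarrow> x i = c"
  shows "leave_one_out_gap a x I = 0"
proof -
  have "(\<Sum>i\<in>I - {k}. a i) * (weighted_mean a x (I - {k}) - weighted_mean a x I)\<^sup>2 = 0" for k
  proof (cases "(\<Sum>i\<in>I - {k}. a i) = 0")
    case False
    moreover have "0 \<le> (\<Sum>i\<in>I - {k}. a i)" "(\<Sum>i\<in>I - {k}. a i) \<le> (\<Sum>i\<in>I. a i)"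
      using fin nonneg by (auto intro: sum_nonneg sum_mono2)
    ultimately have "(\<Sum>i\<in>I. a i) \<noteq> 0" by linarith
    with \<open>(\<Sum>i\<in>I - {k}. a i) \<noteq> 0\<close> show ?thesis
      using weighted_mean_const[of I a x c] weighted_mean_const[of "I - {k}" a x c] const nonneg
      by simp
  qed simp
  then show ?thesis using fin nonneg by (simp only: leave_one_out_gap_eq_sum_sq sum.neutral_const)
qed

lemma leave_one_out_gap_pos:
  assumes fin: "finite I" and nonneg: "\<And>i. i \<in> I \<Longrightarrow> 0 \<le> a i"
    and k: "k\<^sub>1 \<in> I" "k\<^sub>2 \<in> I" "k\<^sub>1 \<noteq> k\<^sub>2" "0 < a k\<^sub>1" "0 < a k\<^sub>2" "x k\<^sub>1 \<noteq> x k\<^sub>2"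
  shows "0 < leave_one_out_gap a x I"
proof (rule ccontr)
  let ?W = "\<lambda>k. \<Sum>i\<in>I - {k}. a i" and ?m = "\<lambda>k. weighted_mean a x (I - {k})"
  let ?M = "weighted_mean a x I"
  assume "\<not> 0 < leave_one_out_gap a x I"
  then have "(\<Sum>k\<in>I. ?W k * (?m k - ?M)\<^sup>2) = 0"
    using fin nonneg leave_one_out_gap_nonneg[of I a x] leave_one_out_gap_eq_sum_sq[of I a x]
    by simp
  then have terms_0: "?W k * (?m k - ?M)\<^sup>2 = 0" if "k \<in> I" for k
    using that fin nonneg by (subst (asm) sum_nonneg_eq_0_iff) (auto intro!: sum_nonneg mult_nonneg_nonneg)
  \<comment> \<open>removing a point of positive weight leaves the mean unchanged only if it sits at the mean\<close>
  have at_mean: "x k = ?M" if "k \<in> I" "0 < a k" "0 < ?W k" for k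
  proof -
    have "?m k = ?M" using terms_0[OF that(1)] that(3) by simp
    have "a k * x k = (\<Sum>i\<in>I. a i * x i) - (\<Sum>i\<in>I - {k}. a i * x i)"
      using fin that(1) by (simp add: sum_diff1)
    also have "\<dots> = (\<Sum>i\<in>I. a i) * ?M - ?W k * ?m k"
      using fin nonneg sum_mult_weighted_mean[of I a x] sum_mult_weighted_mean[of "I - {k}" a x]
      by simp
    also have "\<dots> = a k * ?M"
      using fin that(1) \<open>?m k = ?M\<close> by (simp add: sum_diff1 algebra_simps)
    finally show ?thesis using that(2) by simp
  qed
  have "a k\<^sub>2 \<le> ?W k\<^sub>1" "a k\<^sub>1 \<le> ?W k\<^sub>2"
    using k fin nonneg by (auto intro!: member_le_sum)
  then have "x k\<^sub>1 = ?M" "x k\<^sub>2 = ?M"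
    using at_mean k by fastforce+
  with k(6) show False by simp
qed

section \<open>Finite powers of a probability measure\<close>

lemma integral_PiM_reindex:
  fixes g :: "('i \<Rightarrow> 'a) \<Rightarrow> real"
  assumes Q: "prob_space Q" and t: "inj_on t I" "t \<in> I \<rightarrow> K"
    and g: "g \<in> borel_measurable (PiM I (\<lambda>_. Q))"
  shows "(\<integral>z. g (\<lambda>i\<in>I. z (t i)) \<partial>PiM K (\<lambda>_. Q)) = (\<integral>z. g z \<partial>PiM I (\<lambda>_. Q))"
proof -
  have "distr (PiM K (\<lambda>_. Q)) (PiM I (\<lambda>_. Q)) (\<lambda>z. \<lambda>i\<in>I. z (t i)) = PiM I (\<lambda>_. Q)"
    using distr_PiM_reindex[of K "\<lambda>_. Q" t I] Q t by simp
  moreover have "(\<lambda>z. \<lambda>i\<in>I. z (t i)) \<in> measurable (PiM K (\<lambda>_. Q)) (PiM I (\<lambda>_. Q))"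
    using t(2) by (intro measurable_restrict measurable_component_singleton) auto
  ultimately show ?thesis
    using integral_distr[OF _ g] by metis
qed

lemma integrable_PiM_component:
  fixes g :: "'a \<Rightarrow> real"
  assumes Q: "prob_space Q" and i: "i \<in> I" and g: "integrable Q g"
  shows "integrable (PiM I (\<lambda>_. Q)) (\<lambda>z. g (z i))"
proof -
  have "distr (PiM I (\<lambda>_. Q)) Q (\<lambda>z. z i) = Q"
    using distr_PiM_component[of I "\<lambda>_. Q" i] Q i by simp
  with g show ?thesis
    using integrable_distr_eq[of "\<lambda>z. z i" "PiM I (\<lambda>_. Q)" Q g] i by auto
qed

lemma borel_measurable_integral_fun_upd:
  fixes F :: "('i \<Rightarrow> 'a) \<Rightarrow> real"
  assumes Q: "prob_space Q" and F: "F \<in> borel_measurable (PiM (insert i J) (\<lambda>_. Q))"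
  shows "(\<lambda>x. \<integral>z. F (z(i := x)) \<partial>PiM J (\<lambda>_. Q)) \<in> borel_measurable Q"
proof -
  interpret prob_space "PiM J (\<lambda>_. Q)" using Q by (intro prob_space_PiM)
  have "(\<lambda>y. (snd y)(i := fst y)) \<in> measurable (Q \<Otimes>\<^sub>M PiM J (\<lambda>_. Q)) (PiM (insert i J) (\<lambda>_. Q))"
    by (rule measurable_fun_upd[where J = J]) auto
  from measurable_comp[OF this F] show ?thesis
    by (intro borel_measurable_lebesgue_integral) (simp add: comp_def case_prod_beta)
qed

lemma integral_PiM_insert_fun_upd:
  fixes H :: "('i \<Rightarrow> 'a) \<Rightarrow> real"
  assumes Q: "prob_space Q" and J: "finite J" "i \<notin> J"
    and H: "integrable (PiM (insert i J) (\<lambda>_. Q)) H"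
  shows "(\<integral>z. H z \<partial>PiM (insert i J) (\<lambda>_. Q))
    = (\<integral>x. (\<integral>z. H (z(i := x)) \<partial>PiM J (\<lambda>_. Q)) \<partial>Q)"
proof -
  interpret product_prob_space "\<lambda>_. Q" UNIV
    using Q by (simp add: product_prob_space_def product_sigma_finite_def
        product_prob_space_axioms_def prob_space_imp_sigma_finite)
  have merge: "merge {i} J (x, z) = z(i := x i)" if "z \<in> space (PiM J (\<lambda>_. Q))" for x z
    using that J(2) by (auto simp: merge_def space_PiM PiE_def extensional_def fun_eq_iff)
  have "(\<integral>z. H z \<partial>PiM (insert i J) (\<lambda>_. Q)) = (\<integral>z. H z \<partial>PiM ({i} \<union> J) (\<lambda>_. Q))"
    by simp
  also have "\<dots> = (\<integral>x. (\<integral>z. H (merge {i} J (x, z)) \<partial>PiM J (\<lambda>_. Q)) \<partial>PiM {i} (\<lambda>_. Q))"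
    using H J by (intro product_integral_fold) auto
  also have "\<dots> = (\<integral>x. (\<lambda>t. \<integral>z. H (z(i := t)) \<partial>PiM J (\<lambda>_. Q)) (x i) \<partial>PiM {i} (\<lambda>_. Q))"
    by (intro Bochner_Integration.integral_cong refl) (simp add: merge cong: Bochner_Integration.integral_cong)
  also have "\<dots> = (\<integral>x. (\<integral>z. H (z(i := x)) \<partial>PiM J (\<lambda>_. Q)) \<partial>Q)"
    using H by (intro product_integral_singleton borel_measurable_integral_fun_upd[OF Q]) auto
  finally show ?thesis .
qed

lemma not_AE_PiM_two_components:
  assumes Q: "prob_space Q" and I: "finite I" "i \<in> I" "j \<in> I" "i \<noteq> j"
    and A: "A \<in> sets Q" "emeasure Q A \<noteq> 0" and B: "B \<in> sets Q" "emeasure Q B \<noteq> 0"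
  shows "\<not> (AE z in PiM I (\<lambda>_. Q). \<not> (z i \<in> A \<and> z j \<in> B))"
proof -
  interpret prob_space Q by (rule Q)
  interpret product_sigma_finite "\<lambda>_. Q"
    by (simp add: product_sigma_finite_def sigma_finite_measure_axioms)
  define C where "C k = (if k = i then A else if k = j then B else space Q)" for k
  have C: "C k \<in> sets Q" for k using A B by (simp add: C_def)
  have "emeasure (PiM I (\<lambda>_. Q)) (PiE I C) = (\<Prod>k\<in>I. emeasure Q (C k))"
    using I C by (intro emeasure_PiM) auto
  also have "\<dots> = emeasure Q A * emeasure Q B"
    using I by (simp add: C_def emeasure_space_1 prod.remove[of I i] prod.remove[of "I - {i}" j])
  finally have "emeasure (PiM I (\<lambda>_. Q)) (PiE I C) \<noteq> 0"
    using A B by simp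
  moreover have event: "{z \<in> space (PiM I (\<lambda>_. Q)). \<not> \<not> (z i \<in> A \<and> z j \<in> B)} = PiE I C"
    using I sets.sets_into_space[OF A(1)] sets.sets_into_space[OF B(1)]
    by (auto simp: space_PiM C_def PiE_iff extensional_def split: if_splits) (metis subsetD)+
  ultimately show ?thesis
    using AE_iff_measurable[OF _ event] C by (simp add: sets_PiM_I_finite I)
qed

lemma (in prob_space) AE_eq_expectation_if_AE_le:
  fixes f :: "'a \<Rightarrow> real"
  assumes f: "integrable M f" and le: "AE x in M. f x \<le> expectation f"
  shows "AE x in M. f x = expectation f"
proof -
  have "integral\<^sup>L M (\<lambda>x. expectation f - f x) = 0"
    using f prob_space by simp
  moreover have "integrable M (\<lambda>x. expectation f - f x)"
    using f by simp
  ultimately have "AE x in M. expectation f - f x = 0"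
    using le integral_nonneg_eq_0_iff_AE by (metis (mono_tags, lifting) AE_mp AE_I2 diff_ge_0_iff_ge)
  then show ?thesis by auto
qed

lemma integral_sq_diff_pos_iff:
  fixes f :: "'a \<Rightarrow> real"
  assumes "integrable M (\<lambda>x. (f x - c)\<^sup>2)"
  shows "0 < (\<integral>x. (f x - c)\<^sup>2 \<partial>M) \<longleftrightarrow> \<not> (AE x in M. f x = c)"
proof -
  have "(\<integral>x. (f x - c)\<^sup>2 \<partial>M) = 0 \<longleftrightarrow> (AE x in M. (f x - c)\<^sup>2 = 0)"
    using assms by (intro integral_nonneg_eq_0_iff_AE) auto
  then show ?thesis
    using integral_nonneg_AE[of "\<lambda>x. (f x - c)\<^sup>2" M] by (simp add: order_less_le)
qed

section \<open>Multiple proposals\<close>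

locale mtm_setting =
  fixes M :: "'a measure" and p q f :: "'a \<Rightarrow> real"
  assumes p_measurable[measurable]: "p \<in> borel_measurable M"
    and q_measurable[measurable]: "q \<in> borel_measurable M"
    and p_nonneg: "\<And>x. 0 \<le> p x" and q_nonneg: "\<And>x. 0 \<le> q x"
    and p_prob: "(\<integral>\<^sup>+x. ennreal (p x) \<partial>M) = 1" and q_prob: "(\<integral>\<^sup>+x. ennreal (q x) \<partial>M) = 1"
    and q_pos_if_p_pos: "\<And>x. 0 < p x \<Longrightarrow> 0 < q x"
    and f_measurable[measurable]: "f \<in> borel_measurable M"
    and f_sq_integrable: "integrable (density M (\<lambda>x. ennreal (p x))) (\<lambda>x. (f x)\<^sup>2)"
begin

abbreviation "P \<equiv> density M (\<lambda>x. ennreal (p x))"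
abbreviation "Q \<equiv> density M (\<lambda>x. ennreal (q x))"
abbreviation "w \<equiv> mtm_w p q"

abbreviation Qpow :: "nat set \<Rightarrow> (nat \<Rightarrow> 'a) measure" where
  "Qpow K \<equiv> PiM K (\<lambda>_. Q)"

abbreviation T :: "nat set \<Rightarrow> (nat \<Rightarrow> 'a) \<Rightarrow> real" where
  "T J z \<equiv> mass_mean_sq (\<lambda>i. w (z i)) (\<lambda>i. f (z i)) J"

abbreviation G :: "nat set \<Rightarrow> nat \<Rightarrow> (nat \<Rightarrow> 'a) \<Rightarrow> real" where
  "G J k z \<equiv> w (z k) * f (z k) * weighted_mean (\<lambda>i. w (z i)) (\<lambda>i. f (z i)) J"

abbreviation gap :: "nat set \<Rightarrow> (nat \<Rightarrow> 'a) \<Rightarrow> real" where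
  "gap I z \<equiv> leave_one_out_gap (\<lambda>i. w (z i)) (\<lambda>i. f (z i)) I"

sublocale P: prob_space P
  by (rule prob_spaceI) (simp add: emeasure_density p_prob)

sublocale Q: prob_space Q
  by (rule prob_spaceI) (simp add: emeasure_density q_prob)

lemma borel_measurable_w[measurable]: "w \<in> borel_measurable M"
  unfolding mtm_w_def by measurable

lemma w_nonneg: "0 \<le> w x"
  unfolding mtm_w_def using q_nonneg[of x] by auto

lemma q_mult_w: "q x * w x = p x"
  unfolding mtm_w_def using q_pos_if_p_pos[of x] p_nonneg[of x] by (cases "0 < p x") auto

lemma w_pos_iff: "0 < w x \<longleftrightarrow> 0 < p x"
  unfolding mtm_w_def using q_pos_if_p_pos[of x] p_nonneg[of x] by auto

lemma integral_P_eq_integral_Q_w: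
  assumes [measurable]: "h \<in> borel_measurable M"
  shows "(\<integral>x. h x \<partial>P) = (\<integral>x. w x * h x \<partial>Q)"
proof -
  have "(\<integral>x. h x \<partial>P) = (\<integral>x. q x * (w x * h x) \<partial>M)"
    by (simp add: integral_density p_nonneg mult.assoc[symmetric] q_mult_w)
  also have "\<dots> = (\<integral>x. w x * h x \<partial>Q)"
    by (simp add: integral_density q_nonneg)
  finally show ?thesis .
qed

lemma integrable_Q_w_f_sq: "integrable Q (\<lambda>x. w x * (f x)\<^sup>2)"
proof -
  have "integrable M (\<lambda>x. p x * (f x)\<^sup>2)"
    using f_sq_integrable by (simp add: integrable_density p_nonneg)
  then show ?thesis
    by (simp add: integrable_density q_nonneg mult.assoc[symmetric] q_mult_w)
qed

lemma AE_P_iff_AE_Q: "(AE x in P. R x) \<longleftrightarrow> (AE x in Q. 0 < w x \<longrightarrow> R x)"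
proof -
  have "0 < p x \<longleftrightarrow> 0 < q x \<and> 0 < w x" for x
    using q_pos_if_p_pos[of x] w_pos_iff[of x] by auto
  then show ?thesis by (simp add: AE_density imp_conjL)
qed

lemma borel_measurable_Qpow_component:
  "i \<in> K \<Longrightarrow> g \<in> borel_measurable M \<Longrightarrow> (\<lambda>z. g (z i)) \<in> borel_measurable (Qpow K)"
  by (rule measurable_compose[OF measurable_component_singleton]) auto

lemma borel_measurable_T: "J \<subseteq> K \<Longrightarrow> T J \<in> borel_measurable (Qpow K)"
  unfolding mass_mean_sq_def weighted_mean_def
  by (intro borel_measurable_times borel_measurable_divide borel_measurable_power
      borel_measurable_sum borel_measurable_Qpow_component) auto

lemma borel_measurable_G: "k \<in> K \<Longrightarrow> G K k \<in> borel_measurable (Qpow K)"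
  unfolding weighted_mean_def
  by (intro borel_measurable_times borel_measurable_divide borel_measurable_sum
      borel_measurable_Qpow_component) auto

lemma integrable_sum_w_f_sq: "integrable (Qpow K) (\<lambda>z. \<Sum>i\<in>K. w (z i) * (f (z i))\<^sup>2)"
  by (intro Bochner_Integration.integrable_sum integrable_PiM_component[OF Q.prob_space_axioms]
      integrable_Q_w_f_sq)

lemma integrable_T:
  assumes "finite K" "J \<subseteq> K"
  shows "integrable (Qpow K) (T J)"
proof (rule Bochner_Integration.integrable_bound[OF integrable_sum_w_f_sq borel_measurable_T[OF assms(2)]])
  have "finite J" using assms finite_subset by blast
  have "\<bar>T J z\<bar> \<le> (\<Sum>i\<in>K. w (z i) * (f (z i))\<^sup>2)" for z
  proof -
    have "\<bar>T J z\<bar> \<le> (\<Sum>i\<in>J. w (z i) * (f (z i))\<^sup>2)"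
      using mass_mean_sq_le_sum_sq[OF \<open>finite J\<close>, of "\<lambda>i. w (z i)" "\<lambda>i. f (z i)"]
        mass_mean_sq_nonneg[of J "\<lambda>i. w (z i)" "\<lambda>i. f (z i)"] w_nonneg
      by (simp add: abs_of_nonneg)
    also have "\<dots> \<le> (\<Sum>i\<in>K. w (z i) * (f (z i))\<^sup>2)"
      using assms w_nonneg by (intro sum_mono2) auto
    finally show ?thesis .
  qed
  then show "AE z in Qpow K. norm (T J z) \<le> norm (\<Sum>i\<in>K. w (z i) * (f (z i))\<^sup>2)"
    by (auto intro!: AE_I2 order_trans[OF _ abs_ge_self])
qed

lemma integrable_G:
  assumes "finite K" "k \<in> K"
  shows "integrable (Qpow K) (G K k)"
proof (rule Bochner_Integration.integrable_bound[OF integrable_sum_w_f_sq borel_measurable_G[OF assms(2)]])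
  have "\<bar>G K k z\<bar> \<le> (\<Sum>i\<in>K. w (z i) * (f (z i))\<^sup>2)" for z
    using abs_term_mult_weighted_mean_le[OF assms(1) _ assms(2), of "\<lambda>i. w (z i)" "\<lambda>i. f (z i)"]
      w_nonneg by simp
  then show "AE z in Qpow K. norm (G K k z) \<le> norm (\<Sum>i\<in>K. w (z i) * (f (z i))\<^sup>2)"
    by (auto intro!: AE_I2 order_trans[OF _ abs_ge_self])
qed

lemma integrable_gap: "finite K \<Longrightarrow> integrable (Qpow K) (gap K)"
  unfolding leave_one_out_gap_def
  by (intro Bochner_Integration.integrable_diff Bochner_Integration.integrable_sum
      integrable_mult_right integrable_T) auto

lemma integral_T_restrict:
  assumes "J \<subseteq> K"
  shows "(\<integral>z. T J z \<partial>Qpow K) = (\<integral>z. T J z \<partial>Qpow J)"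
proof -
  have "T J (\<lambda>i\<in>J. z i) = T J z" for z
    by (simp add: mass_mean_sq_def weighted_mean_def)
  then show ?thesis
    using integral_PiM_reindex[OF Q.prob_space_axioms, of "\<lambda>i. i" J K "T J"] assms
    by (auto simp: borel_measurable_T)
qed

lemma integral_T_card:
  assumes "finite A" "finite B" "card A = card B"
  shows "(\<integral>z. T A z \<partial>Qpow A) = (\<integral>z. T B z \<partial>Qpow B)"
proof -
  obtain t where t: "bij_betw t A B"
    using finite_same_card_bij assms by blast
  then have "T A (\<lambda>i\<in>A. z (t i)) = T B z" for z
    using mass_mean_sq_reindex[OF t, of "\<lambda>i. w (z i)" "\<lambda>i. f (z i)"]
    by (simp add: mass_mean_sq_def weighted_mean_def)
  then show ?thesis
    using integral_PiM_reindex[OF Q.prob_space_axioms, of t A B "T A"] t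
    by (simp add: borel_measurable_T bij_betw_def bij_betw_apply)
qed

lemma integral_G_eq:
  assumes "h \<in> K" "k \<in> K"
  shows "(\<integral>z. G K h z \<partial>Qpow K) = (\<integral>z. G K k z \<partial>Qpow K)"
proof -
  let ?t = "Transposition.transpose h k"
  have t: "bij_betw ?t K K" using assms by simp
  have swap: "G K h (\<lambda>i\<in>K. z (?t i)) = G K k z" for z
    using weighted_mean_reindex[OF t, of "\<lambda>i. w (z i)" "\<lambda>i. f (z i)"] assms
    by (simp add: weighted_mean_def)
  have "(\<integral>z. G K h z \<partial>Qpow K) = (\<integral>z. G K h (\<lambda>i\<in>K. z (?t i)) \<partial>Qpow K)"
    using bij_betw_apply[OF t] assms
    by (intro integral_PiM_reindex[symmetric] Q.prob_space_axioms borel_measurable_G) auto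
  also have "\<dots> = (\<integral>z. G K k z \<partial>Qpow K)"
    by (simp only: swap)
  finally show ?thesis .
qed

lemma card_mult_integral_G:
  assumes "finite K" "k \<in> K"
  shows "real (card K) * (\<integral>z. G K k z \<partial>Qpow K) = (\<integral>z. T K z \<partial>Qpow K)"
proof -
  have "real (card K) * (\<integral>z. G K k z \<partial>Qpow K) = (\<Sum>h\<in>K. \<integral>z. G K h z \<partial>Qpow K)"
    using integral_G_eq[OF _ assms(2)] by simp
  also have "\<dots> = (\<integral>z. (\<Sum>h\<in>K. G K h z) \<partial>Qpow K)"
    using assms(1) by (intro Bochner_Integration.integral_sum[symmetric] integrable_G)
  also have "\<dots> = (\<integral>z. T K z \<partial>Qpow K)"
  proof (intro Bochner_Integration.integral_cong refl)
    fix z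
    show "(\<Sum>h\<in>K. G K h z) = T K z"
      using mass_mean_sq_eq[OF assms(1), of "\<lambda>i. w (z i)" "\<lambda>i. f (z i)"] w_nonneg
      by (simp add: sum_distrib_right)
  qed
  finally show ?thesis .
qed

lemma mtm_op_eq_integral_weighted_mean:
  "mtm_op M p q N f x
     = (\<integral>z. weighted_mean (\<lambda>i. w ((z(1 := x)) i)) (\<lambda>i. f ((z(1 := x)) i)) {1..N} \<partial>Qpow {2..N})"
  unfolding mtm_op_def weighted_mean_def Let_def
  by (simp add: sum_divide_distrib)

lemma inner_mtm_op_eq_integral_G:
  assumes "1 \<le> N"
  shows "pi_inner M p f (mtm_op M p q N f) = (\<integral>z. G {1..N} 1 z \<partial>Qpow {1..N})"
proof -
  let ?J = "{2..N}"
  have I: "{1..N} = insert 1 ?J" using assms by auto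
  define F where "F z = weighted_mean (\<lambda>i. w (z i)) (\<lambda>i. f (z i)) {1..N}" for z :: "nat \<Rightarrow> 'a"
  have op: "mtm_op M p q N f x = (\<integral>z. F (z(1 := x)) \<partial>Qpow ?J)" for x
    unfolding F_def by (rule mtm_op_eq_integral_weighted_mean)
  have "F \<in> borel_measurable (Qpow (insert 1 ?J))"
    unfolding F_def weighted_mean_def I[symmetric]
    by (intro borel_measurable_divide borel_measurable_sum borel_measurable_times
        borel_measurable_Qpow_component) auto
  then have [measurable]: "mtm_op M p q N f \<in> borel_measurable M"
    using borel_measurable_integral_fun_upd[OF Q.prob_space_axioms] unfolding op by simp
  have "pi_inner M p f (mtm_op M p q N f) = (\<integral>x. w x * (f x * mtm_op M p q N f x) \<partial>Q)"
    unfolding pi_inner_def by (rule integral_P_eq_integral_Q_w) measurable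
  also have "\<dots> = (\<integral>x. (\<integral>z. G {1..N} 1 (z(1 := x)) \<partial>Qpow ?J) \<partial>Q)"
    unfolding op F_def by (simp add: mult.assoc)
  also have "\<dots> = (\<integral>z. G {1..N} 1 z \<partial>Qpow {1..N})"
    unfolding I using integrable_G[of "insert 1 ?J" 1]
    by (intro integral_PiM_insert_fun_upd[symmetric] Q.prob_space_axioms) auto
  finally show ?thesis .
qed

lemma inner_mtm_op_eq:
  assumes "1 \<le> N"
  shows "pi_inner M p f (mtm_op M p q N f) = (\<integral>z. T {1..N} z \<partial>Qpow {1..N}) / real N"
  using inner_mtm_op_eq_integral_G[OF assms] card_mult_integral_G[of "{1..N}" 1] assms
  by (simp add: field_simps)

lemma integral_gap:
  assumes I: "finite I" "k \<in> I"
  shows "(\<integral>z. gap I z \<partial>Qpow I)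
    = real (card I) * (\<integral>z. T (I - {k}) z \<partial>Qpow (I - {k})) - (real (card I) - 1) * (\<integral>z. T I z \<partial>Qpow I)"
proof -
  have loo: "(\<integral>z. T (I - {j}) z \<partial>Qpow I) = (\<integral>z. T (I - {k}) z \<partial>Qpow (I - {k}))"
    if "j \<in> I" for j
  proof -
    have "(\<integral>z. T (I - {j}) z \<partial>Qpow I) = (\<integral>z. T (I - {j}) z \<partial>Qpow (I - {j}))"
      by (rule integral_T_restrict) auto
    also have "\<dots> = (\<integral>z. T (I - {k}) z \<partial>Qpow (I - {k}))"
      using I that by (intro integral_T_card) auto
    finally show ?thesis .
  qed
  have "(\<integral>z. gap I z \<partial>Qpow I)
      = (\<Sum>j\<in>I. \<integral>z. T (I - {j}) z \<partial>Qpow I) - (real (card I) - 1) * (\<integral>z. T I z \<partial>Qpow I)"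
    unfolding leave_one_out_gap_def using I(1)
    by (subst Bochner_Integration.integral_diff)
      (auto intro!: integrable_T Bochner_Integration.integrable_sum
        simp: Bochner_Integration.integral_sum integrable_T simp del: times_divide_eq_right)
  then show ?thesis by (simp add: loo)
qed

lemma integral_gap_eq_0_if_AE_const:
  assumes I: "finite I" and const: "AE x in P. f x = c"
  shows "(\<integral>z. gap I z \<partial>Qpow I) = 0"
proof (rule integral_eq_zero_AE)
  have "AE x in Q. 0 < w x \<longrightarrow> f x = c"
    using const by (simp add: AE_P_iff_AE_Q)
  then have "AE z in Qpow I. \<forall>i\<in>I. 0 < w (z i) \<longrightarrow> f (z i) = c"
    using I by (intro AE_finite_allI AE_PiM_component Q.prob_space_axioms) auto
  then show "AE z in Qpow I. gap I z = 0"
  proof eventually_elim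
    case (elim z)
    then show ?case using I w_nonneg by (intro leave_one_out_gap_eq_0) auto
  qed
qed

lemma emeasure_Q_ne_0_if_not_AE_P:
  assumes "\<not> (AE x in P. R x)" and [measurable]: "Measurable.pred M R"
  shows "emeasure Q {x \<in> space M. 0 < w x \<and> \<not> R x} \<noteq> 0"
proof
  let ?B = "{x \<in> space M. 0 < w x \<and> \<not> R x}"
  assume "emeasure Q ?B = 0"
  then have "AE x in Q. x \<notin> ?B"
    by (intro AE_not_in) auto
  then have "AE x in Q. 0 < w x \<longrightarrow> R x"
    using AE_space[of Q] by eventually_elim auto
  then have "AE x in P. R x"
    by (simp add: AE_P_iff_AE_Q)
  with assms(1) show False ..
qed

lemma integrable_P_f: "integrable P f"
  by (rule P.square_integrable_imp_integrable[OF _ f_sq_integrable]) simp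

lemma integral_gap_nonneg: "finite I \<Longrightarrow> 0 \<le> (\<integral>z. gap I z \<partial>Qpow I)"
  using w_nonneg by (intro integral_nonneg_AE AE_I2 leave_one_out_gap_nonneg) auto

lemma integral_gap_pos_if_not_AE_const:
  assumes I: "finite I" "i \<in> I" "j \<in> I" "i \<noteq> j"
    and nonconst: "\<not> (AE x in P. f x = P.expectation f)"
  shows "0 < (\<integral>z. gap I z \<partial>Qpow I)"
proof -
  let ?c = "P.expectation f"
  have "\<not> (AE x in P. ?c \<le> f x)"
  proof
    assume "AE x in P. ?c \<le> f x"
    then have "AE x in P. - f x \<le> P.expectation (\<lambda>x. - f x)"
      by simp
    then have "AE x in P. - f x = P.expectation (\<lambda>x. - f x)"
      using integrable_P_f by (intro P.AE_eq_expectation_if_AE_le) simp_all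
    then have "AE x in P. f x = ?c"
      by eventually_elim simp
    with nonconst show False ..
  qed
  moreover have "\<not> (AE x in P. f x \<le> ?c)"
    using P.AE_eq_expectation_if_AE_le[OF integrable_P_f] nonconst by blast
  ultimately have two_sided: "\<not> (AE z in Qpow I. \<not> (z i \<in> {x \<in> space M. 0 < w x \<and> \<not> ?c \<le> f x}
                                         \<and> z j \<in> {x \<in> space M. 0 < w x \<and> \<not> f x \<le> ?c}))"
    using I by (intro not_AE_PiM_two_components Q.prob_space_axioms emeasure_Q_ne_0_if_not_AE_P) auto
  have gap_pos: "0 < gap I z" if "0 < w (z i)" "0 < w (z j)" "f (z i) < ?c" "?c < f (z j)" for z
    using I that w_nonneg by (intro leave_one_out_gap_pos[of _ _ i j]) auto
  have "\<not> (AE z in Qpow I. gap I z = 0)"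
  proof
    assume "AE z in Qpow I. gap I z = 0"
    then have "AE z in Qpow I. \<not> (z i \<in> {x \<in> space M. 0 < w x \<and> \<not> ?c \<le> f x}
                                 \<and> z j \<in> {x \<in> space M. 0 < w x \<and> \<not> f x \<le> ?c})"
      by eventually_elim (use gap_pos in \<open>force simp: not_le\<close>)
    with two_sided show False ..
  qed
  moreover have nonneg: "AE z in Qpow I. 0 \<le> gap I z"
    using I w_nonneg by (auto intro: leave_one_out_gap_nonneg)
  ultimately have "(\<integral>z. gap I z \<partial>Qpow I) \<noteq> 0"
    by (simp add: integral_nonneg_eq_0_iff_AE[OF integrable_gap[OF I(1)] nonneg])
  with integral_gap_nonneg[OF I(1)] show ?thesis by linarith
qed

lemma pi_norm_diff_pos_iff: "0 < pi_norm M p (\<lambda>x. f x - c) \<longleftrightarrow> \<not> (AE x in P. f x = c)"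
proof -
  have sq: "(\<lambda>x. (f x - c)\<^sup>2) = (\<lambda>x. (f x)\<^sup>2 + c\<^sup>2 - 2 * f x * c)"
    by (simp add: fun_eq_iff power2_diff)
  have int: "integrable P (\<lambda>x. (f x - c)\<^sup>2)"
    unfolding sq
    by (intro Bochner_Integration.integrable_diff Bochner_Integration.integrable_add
        integrable_mult_left integrable_mult_right f_sq_integrable integrable_P_f P.integrable_const)
  have "pi_norm M p (\<lambda>x. f x - c) = sqrt (\<integral>x. (f x - c)\<^sup>2 \<partial>P)"
    unfolding pi_norm_def pi_inner_def power2_eq_square ..
  then show ?thesis
    using integral_sq_diff_pos_iff[OF int] by simp
qed

lemma integral_gap_pos_iff:
  assumes "finite I" "i \<in> I" "j \<in> I" "i \<noteq> j"
  shows "0 < (\<integral>z. gap I z \<partial>Qpow I) \<longleftrightarrow> 0 < pi_norm M p (\<lambda>x. f x - pi_expect M p f)"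
  using integral_gap_pos_if_not_AE_const[OF assms] integral_gap_eq_0_if_AE_const[OF assms(1)]
  by (auto simp: pi_norm_diff_pos_iff pi_expect_def)

lemma inner_mtm_op_diff:
  assumes "1 \<le> N"
  shows "pi_inner M p f (mtm_op M p q N f) - pi_inner M p f (mtm_op M p q (N + 1) f)
    = (\<integral>z. gap {1..N + 1} z \<partial>Qpow {1..N + 1}) / (real N * real (N + 1))"
proof -
  define E where "E n = (\<integral>z. T {1..n} z \<partial>Qpow {1..n})" for n
  have "{1..N + 1} - {N + 1} = {1..N}" by auto
  then have "(\<integral>z. gap {1..N + 1} z \<partial>Qpow {1..N + 1}) = real (N + 1) * E N - real N * E (N + 1)"
    using integral_gap[of "{1..N + 1}" "N + 1"] by (simp add: E_def)
  moreover have "E N / real N - E (N + 1) / real (N + 1)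
      = (real (N + 1) * E N - real N * E (N + 1)) / (real N * real (N + 1))"
    using assms by (simp add: diff_frac_eq ac_simps)
  ultimately show ?thesis
    using inner_mtm_op_eq[OF assms] inner_mtm_op_eq[of "N + 1"] by (simp add: E_def)
qed

end

theorem lemma6p6:
  fixes M :: "'a measure" and p q f :: "'a \<Rightarrow> real" and N :: nat
  assumes "sigma_finite_measure M"
    and "p \<in> borel_measurable M" and "q \<in> borel_measurable M"
    and "\<And>x. p x \<ge> 0" and "\<And>x. q x \<ge> 0"
    and "(\<integral>\<^sup>+x. ennreal (p x) \<partial>M) = 1" and "(\<integral>\<^sup>+x. ennreal (q x) \<partial>M) = 1"
    and "\<And>x. p x > 0 \<Longrightarrow> q x > 0"
    and "N \<ge> 1"
    and "f \<in> borel_measurable M"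
    and "integrable (density M (\<lambda>x. ennreal (p x))) (\<lambda>x. (f x)\<^sup>2)"
  shows "pi_inner M p f (mtm_op M p q N f) \<ge> pi_inner M p f (mtm_op M p q (N + 1) f)
    \<and> (pi_inner M p f (mtm_op M p q N f) > pi_inner M p f (mtm_op M p q (N + 1) f)
        \<longleftrightarrow> pi_norm M p (\<lambda>x. f x - pi_expect M p f) > 0)"
proof -
  interpret mtm_setting M p q f
    using assms(2-8,10,11) by unfold_locales
  let ?gap = "\<integral>z. gap {1..N + 1} z \<partial>Qpow {1..N + 1}"
  have diff: "pi_inner M p f (mtm_op M p q N f) - pi_inner M p f (mtm_op M p q (N + 1) f)
      = ?gap / (real N * real (N + 1))"
    using assms(9) by (rule inner_mtm_op_diff)
  have "0 < real N * real (N + 1)"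
    using assms(9) by simp
  moreover have "0 \<le> ?gap"
    by (simp add: integral_gap_nonneg)
  moreover have "0 < ?gap \<longleftrightarrow> 0 < pi_norm M p (\<lambda>x. f x - pi_expect M p f)"
    using assms(9) by (intro integral_gap_pos_iff[of _ 1 2]) auto
  ultimately show ?thesis
    using diff by (smt (verit) divide_nonneg_pos zero_less_divide_iff)
qed

end
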